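(* Let $\gamma>0$, $\gamma\neq1$ be constant. If $\gamma$ is irrational, then $N^{\rm alg}_{\mathbb{R}}(r)=N^{\rm geom}_{\mathbb{R}}(r)$ for all $r$. If $\gamma=p/q$ with $p,q$ positive coprime integers, then, as $r\to\infty$, \[ N^{\rm alg}_{\mathbb{R}}(r)=\Bigl(\Bigl|1-\frac pq\Bigr|+\frac2q\Bigr)\frac{r}{\pi}+O(1). \]
   Context: Half-line problem: for $\lambda\neq0$, find $(u,v)$ on $[0,1]$ with $-u''-\lambda^2u=0$, $-v''-\lambda^2\gamma^2v=0$, $u(0)=v(0)=0$, $u(1)=v(1)$, $u'(1)=v'(1)$; $\lambda$ is an ITE if a nontrivial pair exists. ITEs are the nonzero zeros of $F(\lambda)=\gamma\sin\lambda\cos(\gamma\lambda)-\sin(\gamma\lambda)\cos\lambda$. The algebraic multiplicity of an ITE is its order as a zero of $F$; the geometric multiplicity is $1$. $N^{\rm alg}_{\mathbb{R}}(r)$ (resp. $N^{\rm geom}_{\mathbb{R}}(r)$) is the number of real ITEs in $(0,r]$ counted with algebraic (resp. geometric) multiplicity. *)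

theory Defs
  imports "HOL-Analysis.Analysis" "HOL-Library.Landau_Symbols"
begin

text \<open>Characteristic function whose nonzero zeros are the interior transmission eigenvalues.\<close>
definition ite_F :: "real \<Rightarrow> real \<Rightarrow> real" where
  "ite_F \<gamma> l = \<gamma> * sin l * cos (\<gamma> * l) - sin (\<gamma> * l) * cos l"

definition real_ITEs :: "real \<Rightarrow> real \<Rightarrow> real set" where
  "real_ITEs \<gamma> r = {l. 0 < l \<and> l \<le> r \<and> ite_F \<gamma> l = 0}"

definition alg_mult :: "real \<Rightarrow> real \<Rightarrow> nat" where
  "alg_mult \<gamma> l = (LEAST n. (deriv ^^ n) (ite_F \<gamma>) l \<noteq> 0)"

definition N_alg :: "real \<Rightarrow> real \<Rightarrow> nat" where
  "N_alg \<gamma> r = (\<Sum>l\<in>real_ITEs \<gamma> r. alg_mult \<gamma> l)"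

text \<open>Geometric multiplicity of each ITE is 1.\<close>
definition N_geom :: "real \<Rightarrow> real \<Rightarrow> nat" where
  "N_geom \<gamma> r = (\<Sum>l\<in>real_ITEs \<gamma> r. (1::nat))"

end

theory Submission
  imports Defs
begin

(* Writing gamma*l = (gamma - 1)*l + l puts F into polar form
   F(l) = -rho(l) * sin((gamma - 1)*l - theta(l)) with rho > 0 and |theta| < pi/2.
   Up to the sign of gamma - 1, the phase (gamma - 1)*l - theta(l) has derivative
   proportional to sin(l)^2, so it is strictly monotone, and the real ITEs in (0, r]
   are exactly the points where it passes a multiple of pi: there are
   |gamma - 1|*r/pi + O(1) of them.  Since F' = (1 - gamma^2) sin l sin (gamma*l),
   a zero of F is simple unless sin l = sin (gamma*l) = 0, where it is triple.
   Such common zeros do not exist for irrational gamma, and for gamma = p/q they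
   are the multiples of q*pi, which add 2*r/(q*pi) + O(1) to the algebraic count. *)

section \<open>Zeros of sin composed with a monotone function\<close>

lemma sin_zeros_upto_eq_image:
  "{x. 0 < x \<and> x \<le> a \<and> sin x = 0} = (\<lambda>k. of_int k * pi) ` {1..\<lfloor>a / pi\<rfloor>}"
proof (intro equalityI subsetI)
  fix x assume "x \<in> {x. 0 < x \<and> x \<le> a \<and> sin x = 0}"
  then obtain k :: int where x: "x = of_int k * pi" "0 < x" "x \<le> a"
    by (auto simp: sin_zero_iff_int2)
  then have "1 \<le> k" "k \<le> \<lfloor>a / pi\<rfloor>"
    by (auto simp: zero_less_mult_iff le_floor_iff field_simps)
  with x show "x \<in> (\<lambda>k. of_int k * pi) ` {1..\<lfloor>a / pi\<rfloor>}" by auto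
next
  fix x assume "x \<in> (\<lambda>k. of_int k * pi) ` {1..\<lfloor>a / pi\<rfloor>}"
  then obtain k :: int where "x = of_int k * pi" "1 \<le> k" "k \<le> \<lfloor>a / pi\<rfloor>" by auto
  then show "x \<in> {x. 0 < x \<and> x \<le> a \<and> sin x = 0}"
    by (auto simp: sin_zero_iff_int2 le_floor_iff field_simps)
qed

lemma
  fixes h :: "real \<Rightarrow> real"
  assumes mono: "strict_mono h" and cont: "continuous_on UNIV h" and "h 0 = 0"
  shows finite_sin_comp_zeros: "finite {l. 0 < l \<and> l \<le> r \<and> sin (h l) = 0}"
    and card_sin_comp_zeros: "card {l. 0 < l \<and> l \<le> r \<and> sin (h l) = 0} = nat \<lfloor>h r / pi\<rfloor>"
proof -
  let ?S = "{l. 0 < l \<and> l \<le> r \<and> sin (h l) = 0}"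
  have pos_iff: "0 < h l \<longleftrightarrow> 0 < l" and le_iff: "h l \<le> h r \<longleftrightarrow> l \<le> r" for l
    using strict_mono_less[OF mono, of 0 l] strict_mono_less_eq[OF mono, of l r] \<open>h 0 = 0\<close>
    by simp_all
  have image: "h ` ?S = (\<lambda>k. of_int k * pi) ` {1..\<lfloor>h r / pi\<rfloor>}"
    unfolding sin_zeros_upto_eq_image[symmetric]
  proof (intro equalityI subsetI)
    fix x assume "x \<in> h ` ?S"
    then show "x \<in> {x. 0 < x \<and> x \<le> h r \<and> sin x = 0}" using pos_iff le_iff by auto
  next
    fix x assume x: "x \<in> {x. 0 < x \<and> x \<le> h r \<and> sin x = 0}"
    then have "0 \<le> r" using pos_iff[of r] by auto
    with x obtain l where "0 \<le> l" "l \<le> r" "h l = x"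
      using IVT'[of h 0 x r] \<open>h 0 = 0\<close> continuous_on_subset[OF cont] by auto
    with x have "l \<in> ?S" using pos_iff by auto
    then show "x \<in> h ` ?S" using \<open>h l = x\<close> by blast
  qed
  have inj_h: "inj_on h ?S"
    using strict_mono_on_imp_inj_on[of UNIV h] mono by (auto intro: inj_on_subset)
  have inj_pi: "inj_on (\<lambda>k::int. of_int k * pi) {1..\<lfloor>h r / pi\<rfloor>}"
    by (auto intro: inj_onI)
  show "finite ?S"
    using finite_imageD[OF _ inj_h] image by simp
  have "card ?S = card (h ` ?S)" using card_image[OF inj_h] by simp
  also have "\<dots> = card {1..\<lfloor>h r / pi\<rfloor>}" unfolding image using card_image[OF inj_pi] .
  finally show "card ?S = nat \<lfloor>h r / pi\<rfloor>" by simp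
qed

lemma sin_nonzero_between_multiples_of_pi:
  fixes t :: real and n :: int
  assumes "n * pi < t" "t < (n + 1) * pi"
  shows "sin t \<noteq> 0"
proof
  assume "sin t = 0"
  then obtain i :: int where "t = i * pi" by (auto simp: sin_zero_iff_int2)
  with assms have "of_int n * pi < of_int i * pi" "of_int i * pi < of_int (n + 1) * pi"
    by simp_all
  then have "n < i" "i < n + 1"
    by (simp_all only: mult_less_cancel_right_pos[OF pi_gt_zero] of_int_less_iff)
  then show False by simp
qed

lemma strict_mono_if_derivative_pos_off_multiples_of_pi:
  fixes f f' :: "real \<Rightarrow> real"
  assumes deriv: "\<And>t. (f has_real_derivative f' t) (at t)"
    and nonneg: "\<And>t. f' t \<ge> 0" and pos: "\<And>t. sin t \<noteq> 0 \<Longrightarrow> f' t > 0"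
  shows "strict_mono f"
proof (rule strict_monoI)
  fix x y :: real assume "x < y"
  have cont: "continuous_on A f" for A
    using deriv by (meson DERIV_isCont continuous_at_imp_continuous_on)
  define n where "n = \<lfloor>x / pi\<rfloor>"
  have "of_int n \<le> x / pi" "x / pi < of_int n + 1"
    unfolding n_def by linarith+
  then have "n * pi \<le> x" "x < (n + 1) * pi"
    by (simp_all add: field_simps)
  define v where "v = min y ((n + 1) * pi)"
  have "x < v" using \<open>x < y\<close> \<open>x < (n + 1) * pi\<close> by (simp add: v_def)
  have "f x < f v"
  proof (rule DERIV_pos_imp_increasing_open[OF \<open>x < v\<close> _ cont])
    fix t assume "x < t" "t < v"
    with \<open>n * pi \<le> x\<close> have "sin t \<noteq> 0"
      by (intro sin_nonzero_between_multiples_of_pi[of n]) (auto simp: v_def)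
    then show "\<exists>y. (f has_real_derivative y) (at t) \<and> 0 < y" using deriv pos by blast
  qed
  also have "f v \<le> f y"
    by (rule DERIV_nonneg_imp_increasing_open[OF _ _ cont]) (use deriv nonneg v_def in auto)
  finally show "f x < f y" .
qed

lemma nat_floor_approx:
  fixes x :: real
  assumes "x \<ge> -1"
  shows "\<bar>real (nat \<lfloor>x\<rfloor>) - x\<bar> \<le> 1"
proof (cases "x \<ge> 0")
  case True
  then have "real (nat \<lfloor>x\<rfloor>) = of_int \<lfloor>x\<rfloor>" by simp
  then show ?thesis using of_int_floor_le[of x] real_of_int_floor_gt_diff_one[of x] by linarith
next
  case False
  then show ?thesis using assms by simp
qed

section \<open>Polar form of the characteristic function\<close>

lemma cos_sq_add_mult_sin_sq_pos:
  fixes g l :: real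
  assumes "g > 0"
  shows "(cos l)^2 + g * (sin l)^2 > 0"
proof (cases "sin l = 0")
  case True
  then show ?thesis using sin_cos_squared_add[of l] by simp
next
  case False
  then show ?thesis using assms by (simp add: add_nonneg_pos)
qed

lemma ite_amplitude_sq:
  fixes g l :: real
  shows "((cos l)^2 + g * (sin l)^2)^2 + ((g - 1) * sin l * cos l)^2 = (cos l)^2 + g^2 * (sin l)^2"
proof -
  have "((cos l)^2 + g * (sin l)^2)^2 + ((g - 1) * sin l * cos l)^2
      = ((cos l)^2 + g^2 * (sin l)^2) * ((sin l)^2 + (cos l)^2)"
    by (simp add: algebra_simps power2_eq_square del: sin_cos_squared_add sin_cos_squared_add2 sin_cos_squared_add3)
  then show ?thesis by (simp only: sin_cos_squared_add mult_1_right)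
qed

definition ite_angle :: "real \<Rightarrow> real \<Rightarrow> real" where
  "ite_angle g l = arctan ((g - 1) * sin l * cos l / ((cos l)^2 + g * (sin l)^2))"

lemma has_real_derivative_ite_angle:
  fixes g l :: real
  assumes "g > 0"
  shows "(ite_angle g has_real_derivative
           (g - 1) * ((cos l)^2 - g * (sin l)^2) / ((cos l)^2 + g^2 * (sin l)^2)) (at l)"
proof -
  define N where "N l = (cos l)^2 + g * (sin l)^2" for l
  define M where "M l = (g - 1) * sin l * cos l" for l
  define \<rho>\<^sub>2 where "\<rho>\<^sub>2 = (cos l)^2 + g^2 * (sin l)^2"
  have "N l > 0" unfolding N_def using cos_sq_add_mult_sin_sq_pos[OF assms] .
  have "\<rho>\<^sub>2 > 0" unfolding \<rho>\<^sub>2_def using cos_sq_add_mult_sin_sq_pos assms by simp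
  have dM: "(M has_real_derivative (g - 1) * ((cos l)^2 - (sin l)^2)) (at l)"
    unfolding M_def[abs_def] by (auto intro!: derivative_eq_intros simp: power2_eq_square algebra_simps)
  have dN: "(N has_real_derivative 2 * (g - 1) * sin l * cos l) (at l)"
    unfolding N_def[abs_def] by (auto intro!: derivative_eq_intros simp: power2_eq_square algebra_simps)
  have numerator: "(g - 1) * ((cos l)^2 - (sin l)^2) * N l - M l * (2 * (g - 1) * sin l * cos l)
      = (g - 1) * ((cos l)^2 - g * (sin l)^2) * ((sin l)^2 + (cos l)^2)"
    unfolding N_def M_def by (simp add: algebra_simps power2_eq_square del: sin_cos_squared_add sin_cos_squared_add2 sin_cos_squared_add3)
  have "1 + (M l / N l)^2 = ((N l)^2 + (M l)^2) / (N l)^2"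
    using \<open>N l > 0\<close> by (simp add: field_simps)
  also have "\<dots> = \<rho>\<^sub>2 / (N l)^2"
    unfolding N_def M_def \<rho>\<^sub>2_def ite_amplitude_sq ..
  finally have "inverse (1 + (M l / N l)^2)
      * (((g - 1) * ((cos l)^2 - (sin l)^2) * N l - M l * (2 * (g - 1) * sin l * cos l)) / (N l * N l))
      = (g - 1) * ((cos l)^2 - g * (sin l)^2) / \<rho>\<^sub>2"
    unfolding numerator using \<open>N l > 0\<close> \<open>\<rho>\<^sub>2 > 0\<close> by (simp add: field_simps power2_eq_square)
  moreover have "ite_angle g = (\<lambda>l. arctan (M l / N l))"
    by (simp add: fun_eq_iff ite_angle_def M_def N_def)
  ultimately show ?thesis
    using DERIV_chain2[OF DERIV_arctan DERIV_divide[OF dM dN]] \<open>N l > 0\<close> by (simp add: \<rho>\<^sub>2_def)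
qed

lemma ite_F_polar_form:
  fixes g l :: real
  assumes "g > 0"
  shows "ite_F g l = - sqrt ((cos l)^2 + g^2 * (sin l)^2) * sin ((g - 1) * l - ite_angle g l)"
proof -
  define N where "N = (cos l)^2 + g * (sin l)^2"
  define M where "M = (g - 1) * sin l * cos l"
  define \<rho> where "\<rho> = sqrt ((cos l)^2 + g^2 * (sin l)^2)"
  define A where "A = (g - 1) * l"
  have "N > 0" unfolding N_def using cos_sq_add_mult_sin_sq_pos[OF assms] .
  have \<rho>: "\<rho> = sqrt (N^2 + M^2)" unfolding \<rho>_def N_def M_def ite_amplitude_sq ..
  then have "\<rho> > 0" using \<open>N > 0\<close> by (simp add: add_pos_nonneg)
  have "sqrt (1 + (M / N)^2) = \<rho> / N"
    unfolding \<rho> using \<open>N > 0\<close> by (simp add: field_simps real_sqrt_divide)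
  then have "\<rho> * cos (ite_angle g l) = N" "\<rho> * sin (ite_angle g l) = M"
    unfolding ite_angle_def N_def[symmetric] M_def[symmetric] cos_arctan sin_arctan
    using \<open>N > 0\<close> \<open>\<rho> > 0\<close> by simp_all
  moreover have "\<rho> * sin (A - ite_angle g l)
      = sin A * (\<rho> * cos (ite_angle g l)) - cos A * (\<rho> * sin (ite_angle g l))"
    by (simp add: sin_diff algebra_simps)
  ultimately have "\<rho> * sin (A - ite_angle g l) = sin A * N - cos A * M"
    by simp
  moreover have "ite_F g l = cos A * M - sin A * N"
  proof -
    have "g * l = A + l" unfolding A_def by (simp add: algebra_simps)
    then show ?thesis
      unfolding ite_F_def M_def N_def \<open>g * l = A + l\<close> sin_add cos_add by (simp add: algebra_simps power2_eq_square)
  qed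
  ultimately show ?thesis unfolding \<rho>_def A_def by simp
qed

text \<open>The factor sgn (g - 1) makes the phase increasing for g < 1 as well.\<close>

definition ite_phase :: "real \<Rightarrow> real \<Rightarrow> real" where
  "ite_phase g l = \<bar>g - 1\<bar> * l - sgn (g - 1) * ite_angle g l"

lemma ite_F_eq_0_iff_sin_phase:
  fixes g l :: real
  assumes "g > 0" "g \<noteq> 1"
  shows "ite_F g l = 0 \<longleftrightarrow> sin (ite_phase g l) = 0"
proof -
  have "ite_phase g l = sgn (g - 1) * ((g - 1) * l - ite_angle g l)"
    unfolding ite_phase_def by (simp add: abs_sgn[of "g - 1"] algebra_simps)
  then have "sin (ite_phase g l) = 0 \<longleftrightarrow> sin ((g - 1) * l - ite_angle g l) = 0"
    using \<open>g \<noteq> 1\<close> by (cases "g > 1") (auto simp: sin_diff mult.commute)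
  moreover have "sqrt ((cos l)^2 + g^2 * (sin l)^2) > 0"
    using cos_sq_add_mult_sin_sq_pos[of "g^2" l] \<open>g > 0\<close> by simp
  ultimately show ?thesis using ite_F_polar_form[OF \<open>g > 0\<close>] by simp
qed

lemma ite_phase_0 [simp]: "ite_phase g 0 = 0"
  by (simp add: ite_phase_def ite_angle_def)

lemma ite_phase_approx: "\<bar>ite_phase g l - \<bar>g - 1\<bar> * l\<bar> \<le> pi / 2"
proof -
  have "\<bar>sgn (g - 1) * ite_angle g l\<bar> \<le> \<bar>ite_angle g l\<bar>"
    by (simp add: abs_mult abs_sgn_eq mult_le_cancel_right1)
  also have "\<dots> \<le> pi / 2"
    unfolding ite_angle_def using arctan_bounded by (meson abs_le_iff less_eq_real_def minus_less_iff)
  finally show ?thesis unfolding ite_phase_def by simp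
qed

lemma has_real_derivative_ite_phase:
  fixes g l :: real
  assumes "g > 0"
  shows "(ite_phase g has_real_derivative
           \<bar>g - 1\<bar> * g * (g + 1) * (sin l)^2 / ((cos l)^2 + g^2 * (sin l)^2)) (at l)"
proof -
  define \<rho>\<^sub>2 where "\<rho>\<^sub>2 = (cos l)^2 + g^2 * (sin l)^2"
  have "\<rho>\<^sub>2 > 0" unfolding \<rho>\<^sub>2_def using cos_sq_add_mult_sin_sq_pos assms by simp
  have "(ite_phase g has_real_derivative
          \<bar>g - 1\<bar> - sgn (g - 1) * ((g - 1) * ((cos l)^2 - g * (sin l)^2) / \<rho>\<^sub>2)) (at l)"
    unfolding ite_phase_def[abs_def] \<rho>\<^sub>2_def
    by (auto intro!: derivative_eq_intros has_real_derivative_ite_angle[OF assms])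
  moreover have "\<bar>g - 1\<bar> - sgn (g - 1) * ((g - 1) * ((cos l)^2 - g * (sin l)^2) / \<rho>\<^sub>2)
      = \<bar>g - 1\<bar> * (\<rho>\<^sub>2 - ((cos l)^2 - g * (sin l)^2)) / \<rho>\<^sub>2"
    using \<open>\<rho>\<^sub>2 > 0\<close> by (simp add: abs_sgn[of "g - 1"] field_simps)
  moreover have "\<rho>\<^sub>2 - ((cos l)^2 - g * (sin l)^2) = g * (g + 1) * (sin l)^2"
    unfolding \<rho>\<^sub>2_def by (simp add: algebra_simps power2_eq_square)
  ultimately show ?thesis by (simp add: \<rho>\<^sub>2_def mult.assoc)
qed

lemma strict_mono_ite_phase:
  fixes g :: real
  assumes "g > 0" "g \<noteq> 1"
  shows "strict_mono (ite_phase g)"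
proof (rule strict_mono_if_derivative_pos_off_multiples_of_pi[OF has_real_derivative_ite_phase[OF \<open>g > 0\<close>]])
  fix t :: real
  have "(cos t)^2 + g^2 * (sin t)^2 > 0" using cos_sq_add_mult_sin_sq_pos[of "g^2" t] \<open>g > 0\<close> by simp
  then show "\<bar>g - 1\<bar> * g * (g + 1) * (sin t)^2 / ((cos t)^2 + g^2 * (sin t)^2) \<ge> 0"
    using \<open>g > 0\<close> by simp
  assume "sin t \<noteq> 0"
  with \<open>(cos t)^2 + g^2 * (sin t)^2 > 0\<close> assms
  show "\<bar>g - 1\<bar> * g * (g + 1) * (sin t)^2 / ((cos t)^2 + g^2 * (sin t)^2) > 0"
    by simp
qed

lemma continuous_on_ite_phase:
  fixes g :: real
  assumes "g > 0"
  shows "continuous_on A (ite_phase g)"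
  using has_real_derivative_ite_phase[OF assms]
  by (meson DERIV_isCont continuous_at_imp_continuous_on)

lemma
  fixes g :: real
  assumes "g > 0" "g \<noteq> 1"
  shows finite_real_ITEs: "finite (real_ITEs g r)"
    and N_geom_eq: "N_geom g r = nat \<lfloor>ite_phase g r / pi\<rfloor>"
proof -
  have "real_ITEs g r = {l. 0 < l \<and> l \<le> r \<and> sin (ite_phase g l) = 0}"
    unfolding real_ITEs_def using ite_F_eq_0_iff_sin_phase[OF assms] by simp
  then show "finite (real_ITEs g r)" "N_geom g r = nat \<lfloor>ite_phase g r / pi\<rfloor>"
    using finite_sin_comp_zeros card_sin_comp_zeros
      strict_mono_ite_phase[OF assms] continuous_on_ite_phase[OF \<open>g > 0\<close>]
    unfolding N_geom_def by simp_all
qed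

lemma N_geom_approx:
  fixes g r :: real
  assumes "g > 0" "g \<noteq> 1" "r \<ge> 0"
  shows "\<bar>real (N_geom g r) - \<bar>g - 1\<bar> * r / pi\<bar> \<le> 3 / 2"
proof -
  have "\<bar>ite_phase g r / pi - \<bar>g - 1\<bar> * r / pi\<bar> = \<bar>ite_phase g r - \<bar>g - 1\<bar> * r\<bar> / pi"
    by (simp add: diff_divide_distrib[symmetric])
  also have "\<dots> \<le> 1 / 2"
    using ite_phase_approx[of g r] by (simp add: divide_le_eq)
  finally have phase: "\<bar>ite_phase g r / pi - \<bar>g - 1\<bar> * r / pi\<bar> \<le> 1 / 2" .
  moreover have "\<bar>g - 1\<bar> * r / pi \<ge> 0" using \<open>r \<ge> 0\<close> by simp
  ultimately have "\<bar>real (nat \<lfloor>ite_phase g r / pi\<rfloor>) - ite_phase g r / pi\<bar> \<le> 1"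
    by (intro nat_floor_approx) linarith
  with phase show ?thesis unfolding N_geom_eq[OF assms(1,2)] by linarith
qed

section \<open>Algebraic multiplicities\<close>

lemma
  fixes g :: real
  shows deriv_ite_F: "deriv (ite_F g) = (\<lambda>l. (1 - g^2) * sin l * sin (g * l))"
    and deriv2_ite_F: "(deriv ^^ 2) (ite_F g)
           = (\<lambda>l. (1 - g^2) * (cos l * sin (g * l) + g * sin l * cos (g * l)))"
    and deriv3_ite_F: "(deriv ^^ 3) (ite_F g)
           = (\<lambda>l. (1 - g^2) * (2 * g * cos l * cos (g * l) - (1 + g^2) * sin l * sin (g * l)))"
proof -
  have deriv_eqI: "deriv f = f'" if "\<And>x. (f has_real_derivative f' x) (at x)" for f f' :: "real \<Rightarrow> real"
    using that by (simp add: fun_eq_iff DERIV_imp_deriv)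
  show d1: "deriv (ite_F g) = (\<lambda>l. (1 - g^2) * sin l * sin (g * l))"
    unfolding ite_F_def[abs_def]
    by (rule deriv_eqI) (auto intro!: derivative_eq_intros simp: algebra_simps power2_eq_square)
  have d2: "deriv (\<lambda>l. (1 - g^2) * sin l * sin (g * l))
      = (\<lambda>l. (1 - g^2) * (cos l * sin (g * l) + g * sin l * cos (g * l)))"
    by (rule deriv_eqI) (auto intro!: derivative_eq_intros simp: algebra_simps)
  have d3: "deriv (\<lambda>l. (1 - g^2) * (cos l * sin (g * l) + g * sin l * cos (g * l)))
      = (\<lambda>l. (1 - g^2) * (2 * g * cos l * cos (g * l) - (1 + g^2) * sin l * sin (g * l)))"
    by (rule deriv_eqI) (auto intro!: derivative_eq_intros simp: algebra_simps power2_eq_square)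
  show "(deriv ^^ 2) (ite_F g) = (\<lambda>l. (1 - g^2) * (cos l * sin (g * l) + g * sin l * cos (g * l)))"
    using d1 d2 by (simp add: numeral_2_eq_2)
  show "(deriv ^^ 3) (ite_F g)
      = (\<lambda>l. (1 - g^2) * (2 * g * cos l * cos (g * l) - (1 + g^2) * sin l * sin (g * l)))"
    using d1 d2 d3 by (simp add: numeral_3_eq_3)
qed

lemma cos_nonzero_if_sin_zero: "sin (x::real) = 0 \<Longrightarrow> cos x \<noteq> 0"
  using sin_cos_squared_add[of x] by auto

lemma ite_F_zero_imp_sin_zero_iff:
  fixes g l :: real
  assumes "g \<noteq> 0" "ite_F g l = 0"
  shows "sin l = 0 \<longleftrightarrow> sin (g * l) = 0"
  using assms cos_nonzero_if_sin_zero[of l] cos_nonzero_if_sin_zero[of "g * l"]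
  unfolding ite_F_def by auto

lemma alg_mult_ite_F:
  fixes g l :: real
  assumes "g > 0" "g \<noteq> 1" "ite_F g l = 0"
  shows "alg_mult g l = (if sin l = 0 then 3 else 1)"
proof -
  have "1 - g^2 \<noteq> 0" using assms(1,2) by (simp add: power2_eq_1_iff)
  have zero: "(deriv ^^ 0) (ite_F g) l = 0" using assms(3) by simp
  show ?thesis
  proof (cases "sin l = 0")
    case True
    then have "sin (g * l) = 0"
      using ite_F_zero_imp_sin_zero_iff[of g l] assms by simp
    then have "(deriv ^^ n) (ite_F g) l = 0" if "n < 3" for n
      using that zero True deriv_ite_F deriv2_ite_F
      by (auto simp: less_Suc_eq numeral_3_eq_3 numeral_2_eq_2)
    moreover have "(deriv ^^ 3) (ite_F g) l \<noteq> 0"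
      using True \<open>sin (g * l) = 0\<close> cos_nonzero_if_sin_zero[of l]
        cos_nonzero_if_sin_zero[of "g * l"] \<open>1 - g^2 \<noteq> 0\<close> \<open>g > 0\<close>
      by (simp add: deriv3_ite_F)
    ultimately have "alg_mult g l = 3"
      unfolding alg_mult_def by (intro Least_equality) (auto simp: not_le[symmetric])
    with True show ?thesis by simp
  next
    case False
    then have "sin (g * l) \<noteq> 0"
      using ite_F_zero_imp_sin_zero_iff[of g l] assms by simp
    then have "deriv (ite_F g) l \<noteq> 0"
      using False \<open>1 - g^2 \<noteq> 0\<close> by (simp add: deriv_ite_F)
    then have "alg_mult g l = 1"
      unfolding alg_mult_def using zero by (intro Least_equality) (auto simp: Suc_le_eq intro!: gr0I)
    with False show ?thesis by simp
  qed
qed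

lemma N_alg_eq_N_geom_plus_common_zeros:
  fixes g r :: real
  assumes "g > 0" "g \<noteq> 1"
  shows "N_alg g r = N_geom g r + 2 * card {l. 0 < l \<and> l \<le> r \<and> sin l = 0 \<and> sin (g * l) = 0}"
proof -
  let ?S = "real_ITEs g r"
  have common: "{l \<in> ?S. sin l = 0} = {l. 0 < l \<and> l \<le> r \<and> sin l = 0 \<and> sin (g * l) = 0}"
    using ite_F_zero_imp_sin_zero_iff[of g] \<open>g > 0\<close> unfolding real_ITEs_def ite_F_def by auto
  have "N_alg g r = (\<Sum>l\<in>?S. 1 + (if sin l = 0 then 2 else 0))"
    unfolding N_alg_def by (rule sum.cong) (auto simp: alg_mult_ite_F[OF assms] real_ITEs_def)
  also have "\<dots> = N_geom g r + (\<Sum>l\<in>?S. if sin l = 0 then 2 else 0)"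
    unfolding N_geom_def sum.distrib ..
  also have "(\<Sum>l\<in>?S. if sin l = 0 then 2 else 0) = (\<Sum>l\<in>{l \<in> ?S. sin l = 0}. 2::nat)"
    by (rule sum.inter_filter[symmetric, OF finite_real_ITEs[OF assms]])
  finally show ?thesis unfolding common by simp
qed

section \<open>Common zeros of sin l and sin (gamma l)\<close>

lemma rational_if_sin_common_zero:
  fixes g x :: real
  assumes "sin x = 0" "sin (g * x) = 0" "x \<noteq> 0"
  shows "g \<in> \<rat>"
proof -
  obtain n m :: int where "x = n * pi" "g * x = m * pi"
    using assms(1,2) by (auto simp: sin_zero_iff_int2)
  with \<open>x \<noteq> 0\<close> have "g = of_int m / of_int n" by (auto simp: field_simps)
  then show ?thesis by simp
qed

lemma sin_common_zeros_coprime: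
  fixes p q :: nat and x :: real
  assumes "0 < q" "coprime p q"
  shows "sin x = 0 \<and> sin (real p / real q * x) = 0 \<longleftrightarrow> sin (x / real q) = 0"
proof
  assume "sin x = 0 \<and> sin (real p / real q * x) = 0"
  then obtain n m :: int where n: "x = n * pi" and "real p / real q * x = m * pi"
    by (auto simp: sin_zero_iff_int2)
  then have "of_int (int p * n) = (of_int (m * int q) :: real)"
    using \<open>0 < q\<close> by (simp add: field_simps)
  then have "int q dvd int p * n" by (metis dvd_triv_right of_int_eq_iff)
  moreover have "coprime (int q) (int p)" using \<open>coprime p q\<close> by (simp add: coprime_commute)
  ultimately obtain k where "n = int q * k" by (auto simp: coprime_dvd_mult_right_iff)
  then have "x / real q = of_int k * pi" using n \<open>0 < q\<close> by simp
  then show "sin (x / real q) = 0" by (simp add: sin_zero_iff_int2)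
next
  assume "sin (x / real q) = 0"
  then obtain k :: int where "x / real q = k * pi" by (auto simp: sin_zero_iff_int2)
  then have "x = of_int (k * int q) * pi" "real p / real q * x = of_int (k * int p) * pi"
    using \<open>0 < q\<close> by (simp_all add: field_simps)
  then show "sin x = 0 \<and> sin (real p / real q * x) = 0"
    by (metis sin_zero_iff_int2)
qed

lemma card_common_zeros_coprime:
  fixes p q :: nat and r :: real
  assumes "0 < q" "coprime p q"
  shows "card {l. 0 < l \<and> l \<le> r \<and> sin l = 0 \<and> sin (real p / real q * l) = 0}
           = nat \<lfloor>r / real q / pi\<rfloor>"
proof -
  have "strict_mono (\<lambda>l. l / real q)"
    using \<open>0 < q\<close> by (intro strict_monoI) (simp add: divide_strict_right_mono)
  moreover have "continuous_on UNIV (\<lambda>l. l / real q)"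
    using \<open>0 < q\<close> by (intro continuous_intros) simp
  ultimately show ?thesis
    using card_sin_comp_zeros[of "\<lambda>l. l / real q"] sin_common_zeros_coprime[OF assms]
    by simp
qed

lemma N_alg_approx_rational:
  fixes g r :: real and p q :: nat
  assumes "g > 0" "g \<noteq> 1" "0 < q" "coprime p q" and g: "g = real p / real q" and "r \<ge> 0"
  shows "\<bar>real (N_alg g r) - (\<bar>1 - real p / real q\<bar> + 2 / real q) * r / pi\<bar> \<le> 7 / 2"
proof -
  let ?geom_error = "real (N_geom g r) - \<bar>g - 1\<bar> * r / pi"
  let ?common_error = "real (nat \<lfloor>r / real q / pi\<rfloor>) - r / real q / pi"
  have "real (N_alg g r) = real (N_geom g r) + 2 * real (nat \<lfloor>r / real q / pi\<rfloor>)"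
    using N_alg_eq_N_geom_plus_common_zeros[OF assms(1,2), of r]
      card_common_zeros_coprime[OF assms(3,4)] by (simp add: g)
  moreover have "(\<bar>1 - real p / real q\<bar> + 2 / real q) * r / pi = \<bar>g - 1\<bar> * r / pi + 2 * (r / real q / pi)"
    by (simp add: g abs_minus_commute field_simps)
  ultimately have "\<bar>real (N_alg g r) - (\<bar>1 - real p / real q\<bar> + 2 / real q) * r / pi\<bar>
      = \<bar>?geom_error + 2 * ?common_error\<bar>"
    by (simp add: algebra_simps)
  also have "\<dots> \<le> \<bar>?geom_error\<bar> + \<bar>2 * ?common_error\<bar>"
    by (rule abs_triangle_ineq)
  also have "\<dots> = \<bar>?geom_error\<bar> + 2 * \<bar>?common_error\<bar>"
    by (simp only: abs_mult abs_numeral)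
  also have "\<dots> \<le> 3 / 2 + 2 * 1"
  proof -
    have "r / real q / pi \<ge> -1"
      using \<open>r \<ge> 0\<close> by (simp add: order.trans[of _ 0])
    then show ?thesis
      using N_geom_approx[OF assms(1,2) \<open>r \<ge> 0\<close>] nat_floor_approx[of "r / real q / pi"]
      by (intro add_mono mult_left_mono) simp_all
  qed
  also have "\<dots> = 7 / 2" by simp
  finally show ?thesis .
qed

theorem theorem3:
  fixes \<gamma> :: real
  assumes "\<gamma> > 0" and "\<gamma> \<noteq> 1"
  shows "(\<gamma> \<notin> \<rat> \<longrightarrow> (\<forall>r. N_alg \<gamma> r = N_geom \<gamma> r)) \<and>
         (\<forall>p q :: nat. 0 < p \<and> 0 < q \<and> coprime p q \<and> \<gamma> = real p / real q \<longrightarrow>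
            (\<lambda>r. real (N_alg \<gamma> r) - (\<bar>1 - real p / real q\<bar> + 2 / real q) * r / pi)
              \<in> O[at_top](\<lambda>_. 1))"
proof (intro conjI impI allI)
  fix r :: real
  assume "\<gamma> \<notin> \<rat>"
  then have no_common_zeros: "{l. 0 < l \<and> l \<le> r \<and> sin l = 0 \<and> sin (\<gamma> * l) = 0} = {}"
    using rational_if_sin_common_zero[of _ \<gamma>] by force
  show "N_alg \<gamma> r = N_geom \<gamma> r"
    using N_alg_eq_N_geom_plus_common_zeros[OF assms, of r] unfolding no_common_zeros by simp
next
  fix p q :: nat
  assume "0 < p \<and> 0 < q \<and> coprime p q \<and> \<gamma> = real p / real q"
  then have "0 < q" "coprime p q" and \<gamma>: "\<gamma> = real p / real q" by auto
  have "\<bar>real (N_alg \<gamma> r) - (\<bar>1 - real p / real q\<bar> + 2 / real q) * r / pi\<bar> \<le> 7 / 2"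
    if "r \<ge> 0" for r
    using N_alg_approx_rational[OF assms \<open>0 < q\<close> \<open>coprime p q\<close> \<gamma> that] .
  then show "(\<lambda>r. real (N_alg \<gamma> r) - (\<bar>1 - real p / real q\<bar> + 2 / real q) * r / pi) \<in> O[at_top](\<lambda>_. 1)"
    by (intro bigoI[where c = "7 / 2"]) (auto simp: eventually_at_top_linorder)
qed

end
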